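(* Let $X$ be a set, $T:\mathcal P(X)\to\mathcal P(X)$ an order reversing quasi involution, and $X_0=\{x\in X: x\in T(\{x\})\}$. Call $K\subseteq X$ invariant if $TK=K$. (1) If $TX_0=X_0$, then $X_0$ is the unique invariant set. (2) If $TX_0\not\subseteq X_0$, then there is no invariant set. (3) There exist a set $X$ and an order reversing quasi involution $T$ on $\mathcal P(X)$ with $TX_0\subsetneq X_0$ having no invariant set; there exist such $X,T$ with $TX_0\subsetneq X_0$ having exactly one invariant set; and there exist such $X,T$ with $TX_0\subsetneq X_0$ having more than one invariant set.
   Context: $\mathcal P(X)$ denotes the power set of $X$. A map $T:\mathcal P(X)\to\mathcal P(X)$ is an order reversing quasi involution if for all $K,L\subseteq X$: (i) $K\subseteq TTK$, and (ii) $L\subseteq K$ implies $TK\subseteq TL$. *)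

theory Defs
  imports Main
begin

definition orqi :: "'a set \<Rightarrow> ('a set \<Rightarrow> 'a set) \<Rightarrow> bool" where
  "orqi X T \<longleftrightarrow>
     (\<forall>K. K \<subseteq> X \<longrightarrow> T K \<subseteq> X) \<and>
     (\<forall>K. K \<subseteq> X \<longrightarrow> K \<subseteq> T (T K)) \<and>
     (\<forall>K L. K \<subseteq> X \<longrightarrow> L \<subseteq> K \<longrightarrow> T K \<subseteq> T L)"

definition X0 :: "'a set \<Rightarrow> ('a set \<Rightarrow> 'a set) \<Rightarrow> 'a set" where
  "X0 X T = {x \<in> X. x \<in> T {x}}"

definition invariant :: "'a set \<Rightarrow> ('a set \<Rightarrow> 'a set) \<Rightarrow> 'a set \<Rightarrow> bool" where
  "invariant X T K \<longleftrightarrow> K \<subseteq> X \<and> T K = K"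

end

theory Submission
  imports Defs
begin

text \<open>Every invariant set \<open>K\<close> is squeezed between \<open>T X\<^sub>0\<close> and \<open>X\<^sub>0\<close>: for \<open>x \<in> K\<close>,
  antitonicity gives \<open>K = T K \<subseteq> T {x}\<close>, so \<open>x \<in> X\<^sub>0\<close>; applying \<open>T\<close> to \<open>K \<subseteq> X\<^sub>0\<close> gives
  \<open>T X\<^sub>0 \<subseteq> T K = K\<close>. The examples for (3) are polarities
  \<open>T K = {y \<in> X. \<forall>x\<in>K. x R y}\<close> of symmetric relations \<open>R\<close>, for which \<open>X\<^sub>0\<close> is the set of
  \<open>R\<close>-reflexive points.\<close>

lemma orqi_antimono:
  assumes "orqi X T" "K \<subseteq> X" "L \<subseteq> K"
  shows "T K \<subseteq> T L"
  using assms unfolding orqi_def by blast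

lemma X0_subset: "X0 X T \<subseteq> X"
  unfolding X0_def by blast

lemma invariant_subset_X0:
  assumes "orqi X T" "invariant X T K"
  shows "K \<subseteq> X0 X T"
proof
  fix x assume "x \<in> K"
  from assms(2) have "K \<subseteq> X" "T K = K"
    unfolding invariant_def by auto
  with \<open>x \<in> K\<close> have "x \<in> T {x}"
    using orqi_antimono[OF assms(1) \<open>K \<subseteq> X\<close>, of "{x}"] by auto
  with \<open>x \<in> K\<close> \<open>K \<subseteq> X\<close> show "x \<in> X0 X T"
    unfolding X0_def by auto
qed

lemma T_X0_subset_invariant:
  assumes "orqi X T" "invariant X T K"
  shows "T (X0 X T) \<subseteq> K"
proof -
  have "T (X0 X T) \<subseteq> T K"
    using orqi_antimono[OF assms(1) X0_subset invariant_subset_X0[OF assms]] .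
  with assms(2) show ?thesis
    unfolding invariant_def by simp
qed

lemma invariant_iff_eq_X0:
  assumes "orqi X T" "T (X0 X T) = X0 X T"
  shows "invariant X T K \<longleftrightarrow> K = X0 X T"
proof
  assume "invariant X T K"
  with assms show "K = X0 X T"
    using invariant_subset_X0 T_X0_subset_invariant by (metis subset_antisym)
next
  assume "K = X0 X T"
  with assms(2) show "invariant X T K"
    unfolding invariant_def using X0_subset by simp
qed

lemma no_invariant_if_not_T_X0_subset:
  assumes "orqi X T" "\<not> T (X0 X T) \<subseteq> X0 X T"
  shows "\<not> invariant X T K"
  using assms invariant_subset_X0 T_X0_subset_invariant by (meson subset_trans)

definition polar :: "'a rel \<Rightarrow> 'a set \<Rightarrow> 'a set \<Rightarrow> 'a set" where
  "polar R X K = {y \<in> X. \<forall>x\<in>K. (x, y) \<in> R}"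

lemma polar_empty [simp]: "polar R X {} = X"
  by (simp add: polar_def)

lemma polar_insert [simp]: "polar R X (insert a K) = {y \<in> polar R X K. (a, y) \<in> R}"
  by (auto simp: polar_def)

lemma orqi_polar:
  assumes "sym R"
  shows "orqi X (polar R X)"
  using assms unfolding orqi_def polar_def sym_def by blast

lemma X0_polar: "X0 X (polar R X) = {x \<in> X. (x, x) \<in> R}"
  by (auto simp: X0_def)

lemma exists_orqi_without_invariant:
  "\<exists>(X::nat set) T. orqi X T \<and> T (X0 X T) \<subset> X0 X T \<and> (\<nexists>K. invariant X T K)"
proof -
  let ?X = "{0, 1, 2, 3 :: nat}"
  let ?T = "polar {(0, 3), (3, 0), (1, 2), (2, 1), (2, 2), (3, 3)} ?X"
  have orqi: "orqi ?X ?T"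
    by (rule orqi_polar) (auto simp: sym_def)
  have X0: "X0 ?X ?T = {2, 3}"
    by (auto simp: X0_polar)
  have T_X0: "?T {2, 3} = {}"
    by auto
  have "\<not> invariant ?X ?T K" for K
  proof
    assume inv: "invariant ?X ?T K"
    with orqi X0 have "K \<in> Pow {2, 3}"
      using invariant_subset_X0 by blast
    then have "K = {} \<or> K = {2} \<or> K = {3} \<or> K = {2, 3}"
      by (simp add: Pow_insert) blast
    moreover from inv have "\<forall>x\<in>?X. x \<in> ?T K \<longleftrightarrow> x \<in> K"
      by (simp add: invariant_def)
    ultimately show False
      \<comment> \<open>for \<open>K = {}\<close> simp leaves \<open>\<forall>x. x \<notin> ?X\<close>, which needs a witness\<close>
      by (elim disjE) (simp_all, presburger)
  qed
  moreover have "?T (X0 ?X ?T) \<subset> X0 ?X ?T"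
    unfolding X0 T_X0 by blast
  ultimately show ?thesis
    using orqi by blast
qed

lemma exists_orqi_with_unique_invariant:
  "\<exists>(X::nat set) T. orqi X T \<and> T (X0 X T) \<subset> X0 X T \<and> (\<exists>!K. invariant X T K)"
proof -
  let ?X = "{0, 1, 2 :: nat}"
  let ?T = "polar {(0, 2), (2, 0), (1, 1), (2, 2)} ?X"
  have orqi: "orqi ?X ?T"
    by (rule orqi_polar) (auto simp: sym_def)
  have X0: "X0 ?X ?T = {1, 2}"
    by (auto simp: X0_polar)
  have T_X0: "?T {1, 2} = {}"
    by auto
  have "invariant ?X ?T {1}"
    by (auto simp: invariant_def)
  moreover have "K = {1}" if inv: "invariant ?X ?T K" for K
  proof -
    from orqi X0 inv have "K \<in> Pow {1, 2}"
      using invariant_subset_X0 by blast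
    then have "K = {} \<or> K = {1} \<or> K = {2} \<or> K = {1, 2}"
      by (simp add: Pow_insert) blast
    moreover from inv have "\<forall>x\<in>?X. x \<in> ?T K \<longleftrightarrow> x \<in> K"
      by (simp add: invariant_def)
    ultimately show "K = {1}"
      by (elim disjE) (simp_all, presburger)
  qed
  moreover have "?T (X0 ?X ?T) \<subset> X0 ?X ?T"
    unfolding X0 T_X0 by blast
  ultimately show ?thesis
    using orqi by blast
qed

lemma exists_orqi_with_two_invariants:
  "\<exists>(X::nat set) T. orqi X T \<and> T (X0 X T) \<subset> X0 X T \<and>
     (\<exists>K L. invariant X T K \<and> invariant X T L \<and> K \<noteq> L)"
proof -
  let ?X = "{0, 1 :: nat}"
  let ?T = "polar {(0, 0), (1, 1)} ?X"
  have X0: "X0 ?X ?T = {0, 1}"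
    by (auto simp: X0_polar)
  have T_X0: "?T {0, 1} = {}"
    by auto
  have "orqi ?X ?T"
    by (rule orqi_polar) (auto simp: sym_def)
  moreover have "?T (X0 ?X ?T) \<subset> X0 ?X ?T"
    unfolding X0 T_X0 by blast
  moreover have "invariant ?X ?T {0}" "invariant ?X ?T {1}" "{0 :: nat} \<noteq> {1}"
    by (auto simp: invariant_def)
  ultimately show ?thesis
    by blast
qed

theorem lemma6p2:
  shows
   "(\<forall>(X::'a set) T. orqi X T \<longrightarrow> T (X0 X T) = X0 X T \<longrightarrow>
        (\<forall>K. invariant X T K \<longleftrightarrow> K = X0 X T))
    \<and> (\<forall>(X::'a set) T. orqi X T \<longrightarrow> \<not> T (X0 X T) \<subseteq> X0 X T \<longrightarrow>
        (\<nexists>K. invariant X T K))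
    \<and> (\<exists>(X::nat set) T. orqi X T \<and> T (X0 X T) \<subset> X0 X T \<and> (\<nexists>K. invariant X T K))
    \<and> (\<exists>(X::nat set) T. orqi X T \<and> T (X0 X T) \<subset> X0 X T \<and> (\<exists>!K. invariant X T K))
    \<and> (\<exists>(X::nat set) T. orqi X T \<and> T (X0 X T) \<subset> X0 X T \<and>
        (\<exists>K L. invariant X T K \<and> invariant X T L \<and> K \<noteq> L))"
proof (intro conjI allI impI)
  show "invariant X T K \<longleftrightarrow> K = X0 X T"
    if "orqi X T" "T (X0 X T) = X0 X T" for X :: "'a set" and T K
    using that by (rule invariant_iff_eq_X0)
  show "\<nexists>K. invariant X T K"
    if "orqi X T" "\<not> T (X0 X T) \<subseteq> X0 X T" for X :: "'a set" and T
    using no_invariant_if_not_T_X0_subset[OF that] by blast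
qed (fact exists_orqi_without_invariant exists_orqi_with_unique_invariant
  exists_orqi_with_two_invariants)+

end
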